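(* Let $a\neq 0$ be a real number. On the space of entire functions $f(\alpha)$ of one complex variable, define the linear operators $$N=\frac{e^{a\alpha}-1}{a}\,\frac{d}{d\alpha},\quad A_+=\alpha,\quad A_-=e^{a\alpha}\frac{d}{d\alpha},\quad B_+=\Big(\frac{1-e^{-a\alpha}}{a}\Big)^2,\quad B_-=e^{a\alpha}\frac{d^2}{d\alpha^2},\quad M=1,$$ where functions of $\alpha$ act by multiplication. Then these operators satisfy the commutation relations $[N,A_+]=\frac{e^{aA_+}-1}{a}$, $[N,A_-]=-A_-$, $[A_-,A_+]=Me^{aA_+}$, $[N,B_+]=2B_+$, $[N,B_-]=-2B_--aA_-N$, $[B_-,B_+]=2(1+e^{-aA_+})N+2M-2aA_-B_+$, $[A_+,B_-]=-(1+e^{aA_+})A_-+a\,e^{aA_+}MN$, $[A_+,B_+]=0$, $[A_-,B_+]=2\frac{1-e^{-aA_+}}{a}$, $[A_-,B_-]=-aA_-^2$, and $[M,X]=0$ for each of these operators $X$.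
   Context: $[X,Y]=XY-YX$ denotes the commutator of operators, and $e^{cA_+}$ is the operator of multiplication by $e^{c\alpha}$. These relations are the commutation rules of the non-standard quantum two-photon algebra $U_{a}(h_6)$. *)

theory Defs
  imports "HOL-Analysis.Analysis"
begin

type_synonym cop = "(complex \<Rightarrow> complex) \<Rightarrow> (complex \<Rightarrow> complex)"

definition mulop :: "(complex \<Rightarrow> complex) \<Rightarrow> cop" where
  "mulop g f = (\<lambda>z. g z * f z)"

definition Dop :: cop where
  "Dop f = deriv f"

definition comm :: "cop \<Rightarrow> cop \<Rightarrow> cop" where
  "comm X Y f = (\<lambda>z. X (Y f) z - Y (X f) z)"

definition opN :: "real \<Rightarrow> cop" where
  "opN a f = mulop (\<lambda>z. (exp (of_real a * z) - 1) / of_real a) (Dop f)"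

definition opAp :: cop where
  "opAp f = mulop (\<lambda>z. z) f"

definition opAm :: "real \<Rightarrow> cop" where
  "opAm a f = mulop (\<lambda>z. exp (of_real a * z)) (Dop f)"

definition opBp :: "real \<Rightarrow> cop" where
  "opBp a f = mulop (\<lambda>z. ((1 - exp (- (of_real a * z))) / of_real a)^2) f"

definition opBm :: "real \<Rightarrow> cop" where
  "opBm a f = mulop (\<lambda>z. exp (of_real a * z)) (Dop (Dop f))"

definition opM :: cop where
  "opM f = mulop (\<lambda>z. 1) f"

end

theory Submission
  imports Defs "HOL-Complex_Analysis.Complex_Analysis"
begin

(* Every operator is a multiplication operator h or of the form g D or g D^2, with D = d/dalpha and
   entire coefficients. By the Leibniz rule, commutators of such operators are again differential
   operators whose coefficients are built from g, h and their first two derivatives: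
   [g D, h] = g h', [g D, h D] = (g h' - h g') D, [g D, h D^2] = (g h' - 2 h g') D^2 - h g'' D and
   [g D^2, h] = g h'' + 2 g h' D. Each relation then reduces to the derivatives of the coefficients
   exp(a alpha), (exp(a alpha) - 1)/a, ((1 - exp(-a alpha))/a)^2 and to the identity
   exp(a alpha) exp(-a alpha) = 1. *)

lemma entire_imp_field_differentiable:
  "f holomorphic_on UNIV \<Longrightarrow> f field_differentiable at z"
  by (rule holomorphic_on_imp_differentiable_at) auto

lemma entire_deriv: "f holomorphic_on UNIV \<Longrightarrow> deriv f holomorphic_on UNIV"
  by (rule holomorphic_deriv) auto

lemma deriv_mult_entire:
  assumes "g holomorphic_on UNIV" and "h holomorphic_on UNIV"
  shows "deriv (\<lambda>z. g z * h z) = (\<lambda>z. deriv g z * h z + g z * deriv h z)"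
  using assms by (auto simp: entire_imp_field_differentiable)

lemma deriv2_mult_entire:
  assumes g: "g holomorphic_on UNIV" and h: "h holomorphic_on UNIV"
  shows "deriv (deriv (\<lambda>z. g z * h z)) =
    (\<lambda>z. deriv (deriv g) z * h z + 2 * deriv g z * deriv h z + g z * deriv (deriv h) z)"
proof -
  have "deriv (\<lambda>z. deriv g z * h z + g z * deriv h z) w =
    deriv (deriv g) w * h w + 2 * deriv g w * deriv h w + g w * deriv (deriv h) w" for w
    using g h by (simp add: entire_imp_field_differentiable entire_deriv field_differentiable_add
        field_differentiable_mult algebra_simps)
  then show ?thesis
    by (simp add: deriv_mult_entire[OF g h] fun_eq_iff)
qed

definition diffop1 :: "(complex \<Rightarrow> complex) \<Rightarrow> cop" where
  "diffop1 g f = mulop g (Dop f)"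

definition diffop2 :: "(complex \<Rightarrow> complex) \<Rightarrow> cop" where
  "diffop2 g f = mulop g (Dop (Dop f))"

lemmas diffop_defs = diffop1_def diffop2_def mulop_def Dop_def

lemma mulop_apply: "mulop g f z = g z * f z"
  by (simp add: mulop_def)

lemma diffop1_apply: "diffop1 g f z = g z * deriv f z"
  by (simp add: diffop_defs)

lemma diffop2_apply: "diffop2 g f z = g z * deriv (deriv f) z"
  by (simp add: diffop_defs)

lemma comm_opM: "comm opM X f = (\<lambda>z. 0)"
  by (simp add: comm_def opM_def mulop_def)

lemma comm_swap: "comm X Y f = (\<lambda>z. - comm Y X f z)"
  by (simp add: comm_def)

lemma comm_mulop_mulop: "comm (mulop g) (mulop h) f = (\<lambda>z. 0)"
  by (simp add: comm_def mulop_def)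

lemma deriv_mulop:
  assumes "f holomorphic_on UNIV" and "g holomorphic_on UNIV"
  shows "deriv (mulop g f) z = deriv g z * f z + g z * deriv f z"
  using assms by (simp add: mulop_def deriv_mult_entire)

lemma deriv_diffop1:
  assumes "f holomorphic_on UNIV" and "g holomorphic_on UNIV"
  shows "deriv (diffop1 g f) z = deriv g z * deriv f z + g z * deriv (deriv f) z"
  using assms by (simp add: diffop_defs deriv_mult_entire entire_deriv)

lemma comm_diffop1_mulop:
  assumes "f holomorphic_on UNIV" and "h holomorphic_on UNIV"
  shows "comm (diffop1 g) (mulop h) f = (\<lambda>z. g z * deriv h z * f z)"
  using assms by (simp add: comm_def diffop_defs deriv_mult_entire algebra_simps)

lemma comm_diffop2_mulop:
  assumes "f holomorphic_on UNIV" and "h holomorphic_on UNIV"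
  shows "comm (diffop2 g) (mulop h) f =
    (\<lambda>z. g z * (deriv (deriv h) z * f z + 2 * deriv h z * deriv f z))"
  using assms by (simp add: comm_def diffop_defs deriv2_mult_entire entire_deriv algebra_simps)

lemma comm_diffop1_diffop1:
  assumes "f holomorphic_on UNIV" and "g holomorphic_on UNIV" and "h holomorphic_on UNIV"
  shows "comm (diffop1 g) (diffop1 h) f = (\<lambda>z. (g z * deriv h z - h z * deriv g z) * deriv f z)"
  using assms by (simp add: comm_def diffop_defs deriv_mult_entire entire_deriv algebra_simps)

lemma comm_diffop1_diffop2:
  assumes "f holomorphic_on UNIV" and "g holomorphic_on UNIV" and "h holomorphic_on UNIV"
  shows "comm (diffop1 g) (diffop2 h) f =
    (\<lambda>z. (g z * deriv h z - 2 * h z * deriv g z) * deriv (deriv f) z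
      - h z * deriv (deriv g) z * deriv f z)"
  using assms by (simp add: comm_def diffop_defs deriv2_mult_entire entire_deriv)
    (simp add: deriv_mult_entire entire_deriv algebra_simps)

lemma deriv_deriv_eqI:
  assumes "\<And>z. deriv f z = g z" and "(g has_field_derivative g') (at w)"
  shows "deriv (deriv f) w = g'"
proof -
  have "deriv f = g"
    using assms(1) by (rule ext)
  with assms(2) show ?thesis
    by (simp add: DERIV_imp_deriv)
qed

(* Coefficient derivatives are stated pointwise, and second derivatives separately: the simplifier
   rewrites inner terms first, so a rule for deriv g as a function would destroy the redex
   deriv (deriv g) z. *)

lemma entire_exp_scaled: "(\<lambda>z. exp (c * z)) holomorphic_on UNIV"
  by (intro holomorphic_intros)

lemma deriv_exp_scaled: "deriv (\<lambda>z. exp (c * z)) w = c * exp (c * w)"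
  by (rule DERIV_imp_deriv) (auto intro!: derivative_eq_intros)

lemma deriv2_exp_scaled: "deriv (deriv (\<lambda>z. exp (c * z))) w = c\<^sup>2 * exp (c * w)"
  by (rule deriv_deriv_eqI[OF deriv_exp_scaled])
    (auto intro!: derivative_eq_intros simp: power2_eq_square)

context
  fixes c :: complex
  assumes c: "c \<noteq> 0"
begin

lemma entire_expm1_scaled: "(\<lambda>z. (exp (c * z) - 1) / c) holomorphic_on UNIV"
  using c by (intro holomorphic_intros) auto

lemma deriv_expm1_scaled: "deriv (\<lambda>z. (exp (c * z) - 1) / c) w = exp (c * w)"
  using c by (intro DERIV_imp_deriv) (auto intro!: derivative_eq_intros)

lemma deriv2_expm1_scaled: "deriv (deriv (\<lambda>z. (exp (c * z) - 1) / c)) w = c * exp (c * w)"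
  by (rule deriv_deriv_eqI[OF deriv_expm1_scaled]) (auto intro!: derivative_eq_intros)

lemma entire_opBp_coeff: "(\<lambda>z. ((1 - exp (- (c * z))) / c)\<^sup>2) holomorphic_on UNIV"
  using c by (intro holomorphic_intros) auto

lemma deriv_opBp_coeff:
  "deriv (\<lambda>z. ((1 - exp (- (c * z))) / c)\<^sup>2) w =
    2 * ((1 - exp (- (c * w))) / c) * exp (- (c * w))"
  using c by (intro DERIV_imp_deriv) (auto intro!: derivative_eq_intros)

lemma deriv2_opBp_coeff:
  "deriv (deriv (\<lambda>z. ((1 - exp (- (c * z))) / c)\<^sup>2)) w =
    4 * (exp (- (c * w)))\<^sup>2 - 2 * exp (- (c * w))"
  by (rule deriv_deriv_eqI[OF deriv_opBp_coeff])
    (use c in \<open>auto intro!: derivative_eq_intros simp: field_simps power2_eq_square\<close>)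

end

lemma opN_eq_diffop1: "opN a = diffop1 (\<lambda>z. (exp (of_real a * z) - 1) / of_real a)"
  by (simp add: fun_eq_iff opN_def diffop1_def)

lemma opAm_eq_diffop1: "opAm a = diffop1 (\<lambda>z. exp (of_real a * z))"
  by (simp add: fun_eq_iff opAm_def diffop1_def)

lemma opBm_eq_diffop2: "opBm a = diffop2 (\<lambda>z. exp (of_real a * z))"
  by (simp add: fun_eq_iff opBm_def diffop2_def)

lemma opAp_eq_mulop: "opAp = mulop (\<lambda>z. z)"
  by (simp add: fun_eq_iff opAp_def)

lemma opBp_eq_mulop: "opBp a = mulop (\<lambda>z. ((1 - exp (- (of_real a * z))) / of_real a)\<^sup>2)"
  by (simp add: fun_eq_iff opBp_def)

lemma comm_opAp_opBp: "comm opAp (opBp a) f = (\<lambda>z. 0)"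
  by (simp add: opAp_eq_mulop opBp_eq_mulop comm_mulop_mulop)

lemmas op_eqs = opN_eq_diffop1 opAm_eq_diffop1 opBm_eq_diffop2 opAp_eq_mulop opBp_eq_mulop

lemmas coeff_simps = entire_exp_scaled deriv_exp_scaled deriv2_exp_scaled
  entire_expm1_scaled deriv_expm1_scaled deriv2_expm1_scaled
  entire_opBp_coeff deriv_opBp_coeff deriv2_opBp_coeff

lemmas diffop_simps = mulop_apply diffop1_apply diffop2_apply deriv_mulop deriv_diffop1 entire_deriv

context
  fixes f :: "complex \<Rightarrow> complex"
  assumes f: "f holomorphic_on UNIV"
begin

lemma comm_opAm_opAp: "comm (opAm a) opAp f = (\<lambda>z. opM (\<lambda>w. exp (of_real a * w) * f w) z)"
  unfolding op_eqs using f by (simp add: comm_diffop1_mulop coeff_simps opM_def diffop_simps)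

lemma comm_opAm_opBm: "comm (opAm a) (opBm a) f = (\<lambda>z. - of_real a * opAm a (opAm a f) z)"
  unfolding op_eqs using f
  by (simp add: comm_diffop1_diffop2 coeff_simps diffop_simps)
    (simp add: fun_eq_iff field_simps power2_eq_square)

context
  fixes a :: real
  assumes a: "a \<noteq> 0"
begin

lemma comm_opN_opAp: "comm (opN a) opAp f = (\<lambda>z. (exp (of_real a * z) - 1) / of_real a * f z)"
  unfolding op_eqs using a f by (simp add: comm_diffop1_mulop coeff_simps)

lemma comm_opN_opAm: "comm (opN a) (opAm a) f = (\<lambda>z. - opAm a f z)"
  unfolding op_eqs using a f
  by (simp add: comm_diffop1_diffop1 coeff_simps diffop_simps) (simp add: fun_eq_iff field_simps)

lemma comm_opN_opBp: "comm (opN a) (opBp a) f = (\<lambda>z. 2 * opBp a f z)"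
  unfolding op_eqs using a f
  by (simp add: comm_diffop1_mulop coeff_simps diffop_simps)
    (simp add: fun_eq_iff field_simps exp_minus power2_eq_square)

lemma comm_opN_opBm:
  "comm (opN a) (opBm a) f = (\<lambda>z. - 2 * opBm a f z - of_real a * opAm a (opN a f) z)"
  unfolding op_eqs using a f
  by (simp add: comm_diffop1_diffop2 coeff_simps diffop_simps) (simp add: fun_eq_iff field_simps)

lemma comm_opBm_opBp:
  "comm (opBm a) (opBp a) f = (\<lambda>z. 2 * (1 + exp (- (of_real a * z))) * opN a f z
     + 2 * opM f z - 2 * of_real a * opAm a (opBp a f) z)"
  unfolding op_eqs using a f
  by (simp add: comm_diffop2_mulop coeff_simps opM_def diffop_simps)
    (simp add: fun_eq_iff field_simps exp_minus power2_eq_square)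

lemma comm_opAp_opBm:
  "comm opAp (opBm a) f = (\<lambda>z. - (1 + exp (of_real a * z)) * opAm a f z
     + of_real a * exp (of_real a * z) * opM (opN a f) z)"
  unfolding op_eqs comm_swap[of "mulop _"] using a f
  by (simp add: comm_diffop2_mulop coeff_simps opM_def diffop_simps) (simp add: fun_eq_iff field_simps)

lemma comm_opAm_opBp:
  "comm (opAm a) (opBp a) f = (\<lambda>z. 2 * ((1 - exp (- (of_real a * z))) / of_real a) * f z)"
  unfolding op_eqs using a f
  by (simp add: comm_diffop1_mulop coeff_simps) (simp add: fun_eq_iff field_simps exp_minus)

end

end

theorem mainTheorem4:
  fixes a :: real
  assumes "a \<noteq> 0"
  shows "\<forall>f. f holomorphic_on UNIV \<longrightarrow>
   comm (opN a) opAp f = (\<lambda>z. (exp (of_real a * z) - 1) / of_real a * f z) \<and>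
   comm (opN a) (opAm a) f = (\<lambda>z. - opAm a f z) \<and>
   comm (opAm a) opAp f = (\<lambda>z. opM (\<lambda>w. exp (of_real a * w) * f w) z) \<and>
   comm (opN a) (opBp a) f = (\<lambda>z. 2 * opBp a f z) \<and>
   comm (opN a) (opBm a) f = (\<lambda>z. - 2 * opBm a f z - of_real a * opAm a (opN a f) z) \<and>
   comm (opBm a) (opBp a) f = (\<lambda>z. 2 * (1 + exp (- (of_real a * z))) * opN a f z
        + 2 * opM f z - 2 * of_real a * opAm a (opBp a f) z) \<and>
   comm opAp (opBm a) f = (\<lambda>z. - (1 + exp (of_real a * z)) * opAm a f z
        + of_real a * exp (of_real a * z) * opM (opN a f) z) \<and>
   comm opAp (opBp a) f = (\<lambda>z. 0) \<and>
   comm (opAm a) (opBp a) f = (\<lambda>z. 2 * ((1 - exp (- (of_real a * z))) / of_real a) * f z) \<and>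
   comm (opAm a) (opBm a) f = (\<lambda>z. - of_real a * opAm a (opAm a f) z) \<and>
   comm opM (opN a) f = (\<lambda>z. 0) \<and> comm opM opAp f = (\<lambda>z. 0) \<and>
   comm opM (opAm a) f = (\<lambda>z. 0) \<and> comm opM (opBp a) f = (\<lambda>z. 0) \<and>
   comm opM (opBm a) f = (\<lambda>z. 0) \<and> comm opM opM f = (\<lambda>z. 0)"
  using comm_opN_opAp[OF _ assms] comm_opN_opAm[OF _ assms] comm_opAm_opAp
    comm_opN_opBp[OF _ assms] comm_opN_opBm[OF _ assms] comm_opBm_opBp[OF _ assms]
    comm_opAp_opBm[OF _ assms] comm_opAp_opBp comm_opAm_opBp[OF _ assms] comm_opAm_opBm
    comm_opM
  by blast

end
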